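(* Let $q=p^n$ with $p$ prime, let $d+1$ be a divisor of $q-1$, and let $f:\mathbb{F}_q\to\mathbb{F}_q$ be a $(d+1)$-divisible Dembowski–Ostrom polynomial which is almost-$(d+1)$-to-1. Then: (a) $f$ is zero-difference $d$-balanced; (b) $f$ is differentially $d$-uniform and all its differential sets $D_a(f)=\{f(x+a)-f(x):x\in\mathbb{F}_q\}$, $a\neq 0$, are $\mathbb{F}_p$-linear subspaces of $\mathbb{F}_q$; (c) $d=p^i$ for some integer $i\geq 0$.
   Context: A polynomial $f\in\mathbb{F}_q[x]$, $q=p^n$, is Dembowski–Ostrom (DO) if it can be written as $\sum_{i,j=0}^{n-1}a_{ij}x^{p^i+p^j}$ when $q$ is odd, and as $\sum_{i\neq j}a_{ij}x^{2^i+2^j}$ when $q$ is even. For a divisor $k$ of $q-1$, $f$ is $k$-divisible if $f(x)=f'(x^k)$ for some map $f'$ (equivalently $f(x)=f(\omega x)$ for all $x$ and all $\omega$ with $\omega^k=1$). $f$ is almost-$k$-to-1 if there is a unique element of $\mathrm{Im}(f)$ with exactly one preimage and every other element of $\mathrm{Im}(f)$ has exactly $k$ preimages. $f$ is differentially $d$-uniform if $d=\max_{a\neq 0,\,b}|\{x: f(x+a)-f(x)=b\}|$. $f$ is zero-difference $d$-balanced if for every nonzero $a$ the equation $f(x+a)-f(x)=0$ has exactly $d$ solutions. *)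

theory Defs
  imports "HOL-Computational_Algebra.Computational_Algebra"
begin

definition is_DO :: "nat \<Rightarrow> nat \<Rightarrow> ('a::field \<Rightarrow> 'a) \<Rightarrow> bool" where
  "is_DO p n f \<longleftrightarrow> (\<exists>a :: nat \<Rightarrow> nat \<Rightarrow> 'a. \<forall>x. f x =
     (if p = 2 then (\<Sum>i<n. \<Sum>j\<in>{..<n} - {i}. a i j * x ^ (2 ^ i + 2 ^ j))
      else (\<Sum>i<n. \<Sum>j<n. a i j * x ^ (p ^ i + p ^ j))))"

definition k_divisible :: "nat \<Rightarrow> ('a::field \<Rightarrow> 'a) \<Rightarrow> bool" where
  "k_divisible k f \<longleftrightarrow> (\<exists>f'. \<forall>x. f x = f' (x ^ k))"

definition almost_k_to_1 :: "nat \<Rightarrow> ('a \<Rightarrow> 'b) \<Rightarrow> bool" where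
  "almost_k_to_1 k f \<longleftrightarrow>
     (\<exists>!y. y \<in> range f \<and> card (f -` {y}) = 1) \<and>
     (\<forall>y \<in> range f. card (f -` {y}) \<noteq> 1 \<longrightarrow> card (f -` {y}) = k)"

definition diff_uniformity :: "('a::{finite,ring} \<Rightarrow> 'a) \<Rightarrow> nat" where
  "diff_uniformity f = Max {card {x. f (x + a) - f x = b} | a b. a \<noteq> 0}"

definition diff_uniform :: "nat \<Rightarrow> ('a::{finite,ring} \<Rightarrow> 'a) \<Rightarrow> bool" where
  "diff_uniform d f \<longleftrightarrow> d = diff_uniformity f"

definition zero_diff_balanced :: "nat \<Rightarrow> ('a::ring \<Rightarrow> 'a) \<Rightarrow> bool" where
  "zero_diff_balanced d f \<longleftrightarrow> (\<forall>a. a \<noteq> 0 \<longrightarrow> card {x. f (x + a) - f x = 0} = d)"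

definition diff_set :: "('a::ring \<Rightarrow> 'a) \<Rightarrow> 'a \<Rightarrow> 'a set" where
  "diff_set f a = {f (x + a) - f x | x. True}"

text \<open>Linear subspace over the prime field F_p = range of_nat.\<close>
definition prime_field_subspace :: "'a::field set \<Rightarrow> bool" where
  "prime_field_subspace S \<longleftrightarrow> 0 \<in> S \<and> (\<forall>x\<in>S. \<forall>y\<in>S. x + y \<in> S) \<and>
     (\<forall>c \<in> range (of_nat :: nat \<Rightarrow> 'a). \<forall>x\<in>S. c * x \<in> S)"

end

theory Submission
  imports Defs "HOL-Number_Theory.Residues"
begin

text \<open>
  Write \<open>k = d + 1\<close> and \<open>\<mu>\<^sub>k\<close> for the \<open>k\<close>-th roots of unity, of which there are exactly \<open>k\<close>.
  Divisibility makes \<open>f\<close> constant on every coset \<open>x \<mu>\<^sub>k\<close>; these cosets have \<open>k\<close> elements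
  except \<open>{0}\<close>, so being almost-\<open>k\<close>-to-1 forces the fibres of \<open>f\<close> to be exactly the cosets.
  Hence \<open>f (x + a) = f x\<close> iff \<open>x + a = w x\<close> with \<open>w \<in> \<mu>\<^sub>k - {1}\<close>, i.e. \<open>x = a / (w - 1)\<close>:
  there are \<open>d\<close> solutions. Since \<open>f\<close> is Dembowski--Ostrom, \<open>L\<^sub>a x = f (x + a) - f x - f a\<close> is
  additive, so each equation \<open>f (x + a) - f x = b\<close> has either no solution or as many as
  \<open>ker L\<^sub>a\<close>, namely \<open>d\<close>; the differential set is the image of \<open>L\<^sub>a\<close>, and \<open>d = |ker L\<^sub>a|\<close>
  divides \<open>q = p\<^sup>n\<close>.
\<close>

lemma card_eq_card_image_mult_fibre:
  assumes "finite A" and "\<And>y. y \<in> g ` A \<Longrightarrow> card {x \<in> A. g x = y} = c"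
  shows "card A = card (g ` A) * c"
proof -
  have "(\<Sum>x\<in>A. card {y \<in> g ` A. g x = y}) = c * card (g ` A)"
    by (rule sum_multicount) (use assms in auto)
  moreover have "{y \<in> g ` A. g x = y} = {g x}" if "x \<in> A" for x
    using that by auto
  ultimately show ?thesis
    by (simp add: mult.commute)
qed

subsection \<open>Roots of unity in a finite field\<close>

lemma card_roots_of_unity_le:
  assumes "k > 0"
  shows "card {x :: 'a :: idom. x ^ k = 1} \<le> k"
proof -
  let ?P = "Polynomial.monom (1 :: 'a) k - 1"
  have "Polynomial.coeff ?P k = 1"
    using assms by (simp add: coeff_monom)
  hence "?P \<noteq> 0"
    by (metis Polynomial.coeff_0 zero_neq_one)
  have "{x :: 'a. x ^ k = 1} = {x. poly ?P x = 0}"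
    by (simp add: poly_monom)
  also have "card \<dots> \<le> Polynomial.degree ?P"
    by (rule card_poly_roots_bound[OF \<open>?P \<noteq> 0\<close>])
  also have "Polynomial.degree ?P \<le> k"
    by (metis degree_diff_le degree_monom_le degree_1 zero_le)
  finally show ?thesis .
qed

lemma power_card_minus_one_eq_one:
  fixes x :: "'a :: {finite, field}"
  assumes "x \<noteq> 0"
  shows "x ^ (card (UNIV :: 'a set) - 1) = 1"
proof -
  have "(\<Prod>y\<in>UNIV - {0}. x * y) = x ^ (card (UNIV :: 'a set) - 1) * \<Prod>(UNIV - {0})"
    by (simp add: prod.distrib mult_ac)
  moreover have "(\<Prod>y\<in>UNIV - {0}. x * y) = \<Prod>(UNIV - {0})"
    by (rule prod.reindex_bij_witness[of _ "\<lambda>y. y / x" "\<lambda>y. x * y"]) (use assms in auto)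
  moreover have "\<Prod>(UNIV - {0 :: 'a}) \<noteq> 0"
    by simp
  ultimately show ?thesis
    by simp
qed

lemma power_fibre_eq_roots_of_unity_coset:
  fixes x :: "'a :: field"
  assumes "x \<noteq> 0"
  shows "{y. y ^ k = x ^ k} = (\<lambda>w. w * x) ` {w. w ^ k = 1}"
proof (intro subset_antisym subsetI)
  fix y assume "y \<in> {y. y ^ k = x ^ k}"
  hence "(y / x) ^ k = 1" and "y = y / x * x"
    using assms by (auto simp: power_divide)
  thus "y \<in> (\<lambda>w. w * x) ` {w. w ^ k = 1}"
    by blast
qed (auto simp: power_mult_distrib)

lemma card_image_mult_right_nonzero:
  fixes x :: "'a :: field"
  assumes "x \<noteq> 0"
  shows "card ((\<lambda>w. w * x) ` S) = card S"
  by (rule card_image) (use assms in \<open>auto simp: inj_on_def\<close>)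

text \<open>The power map \<open>x \<mapsto> x\<^sup>k\<close> on \<open>F\<^sup>*\<close> has fibres of size \<open>|\<mu>\<^sub>k|\<close> and image inside \<open>\<mu>\<^sub>m\<close>,
  where \<open>q - 1 = k m\<close>; hence \<open>q - 1 \<le> m |\<mu>\<^sub>k|\<close>.\<close>
lemma card_roots_of_unity:
  assumes "k > 0" and "k dvd card (UNIV :: 'a :: {finite, field} set) - 1"
  shows "card {w :: 'a. w ^ k = 1} = k"
proof -
  define R where "R = {w :: 'a. w ^ k = 1}"
  define U where "U = (UNIV :: 'a set) - {0}"
  obtain m where m: "card (UNIV :: 'a set) - 1 = k * m"
    using assms(2) by blast
  have "card {0, 1 :: 'a} \<le> card (UNIV :: 'a set)"
    by (rule card_mono) auto
  hence "m > 0"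
    using m by (cases m) auto
  have fibre: "card {x \<in> U. x ^ k = y} = card R" if image: "y \<in> (\<lambda>x. x ^ k) ` U" for y
  proof -
    obtain x where "x \<in> U" and y: "y = x ^ k"
      using image by (rule imageE)
    hence "x \<noteq> 0"
      by (simp add: U_def)
    hence "{x \<in> U. x ^ k = y} = {z. z ^ k = x ^ k}"
      using assms(1) y by (auto simp: U_def power_0_left)
    thus ?thesis
      using \<open>x \<noteq> 0\<close> by (simp add: power_fibre_eq_roots_of_unity_coset card_image_mult_right_nonzero R_def)
  qed
  have "(x ^ k) ^ m = 1" if "x \<in> U" for x
    using power_card_minus_one_eq_one[of x] that unfolding m by (simp add: U_def power_mult)
  hence "(\<lambda>x. x ^ k) ` U \<subseteq> {y. y ^ m = 1}"
    by blast
  hence "card ((\<lambda>x. x ^ k) ` U) \<le> card {y :: 'a. y ^ m = 1}"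
    by (rule card_mono[rotated]) simp
  also have "\<dots> \<le> m"
    by (rule card_roots_of_unity_le[OF \<open>m > 0\<close>])
  finally have "card ((\<lambda>x. x ^ k) ` U) * card R \<le> m * card R"
    by (rule mult_le_mono1)
  moreover have "k * m = card ((\<lambda>x. x ^ k) ` U) * card R"
    using card_eq_card_image_mult_fibre[of U "\<lambda>x. x ^ k", OF _ fibre] m
    by (simp add: U_def card_Diff_singleton)
  ultimately have "k \<le> card R"
    using \<open>m > 0\<close> by (metis mult.commute mult_le_cancel2)
  moreover have "card R \<le> k"
    unfolding R_def by (rule card_roots_of_unity_le[OF assms(1)])
  ultimately show ?thesis
    by (simp add: R_def)
qed

subsection \<open>Maps with additive polarization\<close>

text \<open>This is the only consequence of the Dembowski--Ostrom property that the argument uses.\<close>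
definition additive_polarization :: "('a :: ab_group_add \<Rightarrow> 'a) \<Rightarrow> bool" where
  "additive_polarization f \<longleftrightarrow> (\<forall>a. additive (\<lambda>x. f (x + a) - f x - f a))"

lemma additive_polarization_sum:
  assumes "\<And>i. i \<in> I \<Longrightarrow> additive_polarization (h i)"
  shows "additive_polarization (\<lambda>x. \<Sum>i\<in>I. h i x)"
  unfolding additive_polarization_def
proof (intro allI additive.intro)
  fix a x y
  have "h i (x + y + a) - h i (x + y) - h i a
      = (h i (x + a) - h i x - h i a) + (h i (y + a) - h i y - h i a)" if "i \<in> I" for i
    using assms[OF that] by (simp add: additive_polarization_def additive_def)
  thus "(\<Sum>i\<in>I. h i (x + y + a)) - (\<Sum>i\<in>I. h i (x + y)) - (\<Sum>i\<in>I. h i a)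
      = ((\<Sum>i\<in>I. h i (x + a)) - (\<Sum>i\<in>I. h i x) - (\<Sum>i\<in>I. h i a))
        + ((\<Sum>i\<in>I. h i (y + a)) - (\<Sum>i\<in>I. h i y) - (\<Sum>i\<in>I. h i a))"
    by (simp add: sum.distrib flip: sum_subtractf cong: sum.cong)
qed

lemma additive_polarization_scaled_product:
  fixes c :: "'a :: comm_ring_1"
  assumes "additive A" and "additive B"
  shows "additive_polarization (\<lambda>x. c * (A x * B x))"
  using assms by (simp add: additive_polarization_def additive_def algebra_simps)

lemma additive_power_CHAR_power:
  assumes "prime CHAR('a :: comm_ring_1)"
  shows "additive (\<lambda>x :: 'a. x ^ (CHAR('a) ^ i))"
  by (rule additive.intro) (rule freshmans_dream'[OF assms refl])

lemma CHAR_eq_prime_of_card: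
  assumes "prime p" and "card (UNIV :: 'a :: {finite, field} set) = p ^ n"
  shows "CHAR('a) = p"
proof -
  have "prime CHAR('a)"
    by (rule prime_CHAR_semidom) (simp add: finite_imp_CHAR_pos)
  moreover have "CHAR('a) dvd p ^ n"
    using CHAR_dvd_CARD[where 'a = 'a] assms(2) by simp
  ultimately show ?thesis
    using assms(1) prime_dvd_power primes_dvd_imp_eq by blast
qed

lemma is_DO_additive_polarization:
  fixes f :: "'a :: {finite, field} \<Rightarrow> 'a"
  assumes "prime p" and "card (UNIV :: 'a set) = p ^ n" and "is_DO p n f"
  shows "additive_polarization f"
proof -
  have CHAR: "CHAR('a) = p"
    by (rule CHAR_eq_prime_of_card[OF assms(1,2)])
  obtain c where c: "\<forall>x. f x =
     (if p = 2 then (\<Sum>i<n. \<Sum>j\<in>{..<n} - {i}. c i j * x ^ (2 ^ i + 2 ^ j))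
      else (\<Sum>i<n. \<Sum>j<n. c i j * x ^ (p ^ i + p ^ j)))"
    using assms(3) unfolding is_DO_def by blast
  define J where "J i = (if p = 2 then {..<n} - {i} else {..<n})" for i
  have "f = (\<lambda>x. \<Sum>i<n. \<Sum>j\<in>J i. c i j * (x ^ (p ^ i) * x ^ (p ^ j)))"
    by (rule ext) (simp add: c J_def power_add)
  thus ?thesis
    using additive_power_CHAR_power[where 'a = 'a] assms(1) CHAR
    by (simp add: additive_polarization_sum additive_polarization_scaled_product)
qed

lemma card_additive_fibre:
  assumes "additive L" and "L x0 = c"
  shows "card {x. L x = c} = card {x. L x = 0}"
proof -
  have "{x. L x = c} = (\<lambda>y. y + x0) ` {x. L x = 0}"
  proof (intro subset_antisym subsetI)
    fix x assume "x \<in> {x. L x = c}"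
    hence "L (x - x0) = 0" and "x = (x - x0) + x0"
      using assms by (auto simp: additive.diff)
    thus "x \<in> (\<lambda>y. y + x0) ` {x. L x = 0}"
      by blast
  qed (use assms in \<open>auto simp: additive.add\<close>)
  thus ?thesis
    by (simp add: card_image)
qed

lemma card_additive_kernel_dvd_card:
  fixes L :: "'a :: {finite, ab_group_add} \<Rightarrow> 'b :: ab_group_add"
  assumes "additive L"
  shows "card {x. L x = 0} dvd card (UNIV :: 'a set)"
proof -
  have "card {x. L x = y} = card {x. L x = 0}" if "y \<in> range L" for y
    using that card_additive_fibre[OF assms] by blast
  hence "card (UNIV :: 'a set) = card (range L) * card {x. L x = 0}"
    by (intro card_eq_card_image_mult_fibre) simp_all
  thus ?thesis
    by simp
qed

lemma prime_field_subspace_iff_add_closed: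
  "prime_field_subspace S \<longleftrightarrow> 0 \<in> S \<and> (\<forall>x\<in>S. \<forall>y\<in>S. x + y \<in> S)"
proof
  assume closed: "0 \<in> S \<and> (\<forall>x\<in>S. \<forall>y\<in>S. x + y \<in> S)"
  have "of_nat m * x \<in> S" if "x \<in> S" for m x
    using that closed by (induction m) (simp_all add: algebra_simps)
  thus "prime_field_subspace S"
    using closed unfolding prime_field_subspace_def by auto
qed (simp add: prime_field_subspace_def)

lemma prime_field_subspace_range_additive:
  assumes "additive L"
  shows "prime_field_subspace (range L)"
proof -
  have "L x + L y \<in> range L" for x y
    using additive.add[OF assms, of x y] by (metis rangeI)
  moreover have "0 \<in> range L"
    using additive.zero[OF assms] by (metis rangeI)
  ultimately show ?thesis
    unfolding prime_field_subspace_iff_add_closed by blast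
qed

subsection \<open>Derivatives of maps with additive polarization\<close>

lemma card_diff_solutions_eq_card_kernel:
  assumes "additive_polarization f" and "f (x0 + a) - f x0 = b"
  shows "card {x. f (x + a) - f x = b} = card {x. f (x + a) - f x - f a = 0}"
proof -
  let ?L = "\<lambda>x. f (x + a) - f x - f a"
  have L: "additive ?L"
    using assms(1) by (simp add: additive_polarization_def)
  have "card {x. f (x + a) - f x = b} = card {x. ?L x = b - f a}"
    by (rule arg_cong[where f = card]) auto
  also have "\<dots> = card {x. ?L x = 0}"
    by (rule card_additive_fibre[OF L]) (use assms(2) in simp)
  finally show ?thesis .
qed

lemma diff_set_eq_range_polarization:
  assumes "additive_polarization f" and "f (x0 + a) = f x0"
  shows "diff_set f a = range (\<lambda>x. f (x + a) - f x - f a)"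
    (is "_ = range ?L")
proof -
  have L: "additive ?L"
    using assms(1) by (simp add: additive_polarization_def)
  have "?L x0 = - f a"
    using assms(2) by simp
  hence shift: "f (x + a) - f x = ?L (x - x0)" for x
    using additive.diff[OF L, of x x0] by simp
  show ?thesis
  proof (intro subset_antisym subsetI)
    fix u assume "u \<in> diff_set f a"
    then obtain x where "u = f (x + a) - f x"
      by (auto simp: diff_set_def)
    thus "u \<in> range ?L"
      using shift[of x] by simp
  next
    fix u assume "u \<in> range ?L"
    then obtain z where "u = ?L z"
      by blast
    hence "u = f (z + x0 + a) - f (z + x0)"
      using shift[of "z + x0"] by simp
    thus "u \<in> diff_set f a"
      by (auto simp: diff_set_def)
  qed
qed

lemma prime_field_subspace_diff_set:
  assumes "additive_polarization f" and "f (x0 + a) = f x0"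
  shows "prime_field_subspace (diff_set f a)"
proof -
  have "additive (\<lambda>x. f (x + a) - f x - f a)"
    using assms(1) by (simp add: additive_polarization_def)
  thus ?thesis
    unfolding diff_set_eq_range_polarization[OF assms] by (rule prime_field_subspace_range_additive)
qed

lemma zero_diff_balanced_ex_solution:
  assumes "zero_diff_balanced d f" and "d \<noteq> 0" and "a \<noteq> 0"
  shows "\<exists>x. f (x + a) = f x"
proof -
  have "card {x. f (x + a) - f x = 0} = d"
    using assms(1,3) unfolding zero_diff_balanced_def by blast
  hence "{x. f (x + a) - f x = 0} \<noteq> {}"
    using assms(2) by (metis card.empty)
  thus ?thesis
    by auto
qed

lemma zero_diff_balanced_dvd_card:
  fixes f :: "'a :: {finite, field} \<Rightarrow> 'a"
  assumes "additive_polarization f" and "zero_diff_balanced d f" and "d \<noteq> 0"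
  shows "d dvd card (UNIV :: 'a set)"
proof -
  obtain x0 where "f (x0 + 1) = f x0"
    using zero_diff_balanced_ex_solution[OF assms(2,3) one_neq_zero] by blast
  hence x0: "f (x0 + 1) - f x0 = 0"
    by simp
  have "d = card {x. f (x + 1) - f x = 0}"
    using assms(2) unfolding zero_diff_balanced_def by simp
  also have "\<dots> = card {x. f (x + 1) - f x - f 1 = 0}"
    by (rule card_diff_solutions_eq_card_kernel[OF assms(1) x0])
  also have "\<dots> dvd card (UNIV :: 'a set)"
    using assms(1) by (intro card_additive_kernel_dvd_card) (simp add: additive_polarization_def)
  finally show ?thesis .
qed

lemma diff_uniform_of_zero_diff_balanced:
  fixes f :: "'a :: {finite, field} \<Rightarrow> 'a"
  assumes "additive_polarization f" and "zero_diff_balanced d f" and "d \<noteq> 0"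
  shows "diff_uniform d f"
proof -
  let ?N = "\<lambda>a b. card {x. f (x + a) - f x = b}"
  have N: "?N a b \<in> {0, d}" if "a \<noteq> 0" for a b
  proof (cases "\<exists>x1. f (x1 + a) - f x1 = b")
    case True
    then obtain x1 where x1: "f (x1 + a) - f x1 = b"
      by blast
    have zero: "?N a 0 = d"
      using assms(2) \<open>a \<noteq> 0\<close> by (simp add: zero_diff_balanced_def)
    obtain x0 where "f (x0 + a) = f x0"
      using zero_diff_balanced_ex_solution[OF assms(2,3) \<open>a \<noteq> 0\<close>] by blast
    hence x0: "f (x0 + a) - f x0 = 0"
      by simp
    have "?N a b = ?N a 0"
      by (rule trans[OF card_diff_solutions_eq_card_kernel[OF assms(1) x1]
            card_diff_solutions_eq_card_kernel[OF assms(1) x0, symmetric]])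
    thus ?thesis
      using zero by simp
  qed simp
  define D where "D = {?N a b | a b. a \<noteq> 0}"
  have sub: "D \<subseteq> {0, d}"
  proof
    fix n assume "n \<in> D"
    then obtain a b where "a \<noteq> 0" and "n = ?N a b"
      by (auto simp: D_def)
    thus "n \<in> {0, d}"
      using N by simp
  qed
  have "?N 1 0 = d"
    using assms(2) by (simp add: zero_diff_balanced_def)
  hence "d \<in> D"
    unfolding D_def by (intro CollectI exI[of _ 1] exI[of _ 0]) simp
  moreover have "finite D"
    using sub by (rule finite_subset) simp
  ultimately have "Max D = d"
    using sub by (intro Max_eqI) auto
  thus ?thesis
    by (simp add: diff_uniform_def diff_uniformity_def D_def)
qed

subsection \<open>Fibres of divisible almost-\<open>k\<close>-to-1 maps\<close>

lemma k_divisible_mult_root_of_unity: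
  assumes "k_divisible k f" and "w ^ k = 1"
  shows "f (w * x) = f x"
  using assms by (auto simp: k_divisible_def power_mult_distrib)

lemma not_almost_1_to_1:
  fixes x y :: 'a and f :: "'a \<Rightarrow> 'b"
  assumes "x \<noteq> y"
  shows "\<not> almost_k_to_1 1 f"
proof
  assume almost: "almost_k_to_1 1 f"
  then obtain y0 where unique: "\<And>z. z \<in> range f \<Longrightarrow> card (f -` {z}) = 1 \<Longrightarrow> z = y0"
    unfolding almost_k_to_1_def by blast
  have fibres: "card (f -` {f z}) = 1" for z
    using almost unfolding almost_k_to_1_def by blast
  show False
  proof (cases "f x = f y")
    case True
    obtain z where "f -` {f x} = {z}"
      using fibres[of x] by (rule card_1_singletonE)
    hence "x = z" and "y = z"
      using True by auto
    thus False
      using assms by simp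
  next
    case False
    thus False
      using unique[OF rangeI fibres] by metis
  qed
qed

text \<open>The fibre of size one is invariant under multiplication by a root of unity \<open>w \<noteq> 1\<close>,
  so it must be \<open>{0}\<close>.\<close>
lemma almost_k_to_1_fibre_zero:
  fixes f :: "'a :: field \<Rightarrow> 'a" and w :: 'a
  assumes "k_divisible k f" and "almost_k_to_1 k f" and "w ^ k = 1" and "w \<noteq> 1"
  shows "f -` {f 0} = {0}"
proof -
  obtain y where "card (f -` {y}) = 1"
    using assms(2) unfolding almost_k_to_1_def by blast
  then obtain z where "f -` {y} = {z}"
    by (rule card_1_singletonE)
  hence "f -` {f z} = {z}"
    by auto
  moreover have "w * z \<in> f -` {f z}"
    using k_divisible_mult_root_of_unity[OF assms(1,3)] by simp
  ultimately have "(w - 1) * z = 0"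
    by (simp add: algebra_simps)
  hence "z = 0"
    using assms(4) by simp
  thus ?thesis
    using \<open>f -` {f z} = {z}\<close> by simp
qed

lemma k_divisible_almost_k_to_1_eq_iff:
  fixes f :: "'a :: {finite, field} \<Rightarrow> 'a"
  assumes "k_divisible k f" and "almost_k_to_1 k f"
    and roots: "card {w :: 'a. w ^ k = 1} = k" and "k \<noteq> 1"
  shows "f y = f x \<longleftrightarrow> (\<exists>w. w ^ k = 1 \<and> y = w * x)"
proof
  assume "\<exists>w. w ^ k = 1 \<and> y = w * x"
  thus "f y = f x"
    using k_divisible_mult_root_of_unity[OF assms(1)] by blast
next
  assume "f y = f x"
  define R where "R = {w :: 'a. w ^ k = 1}"
  have "1 \<in> R" and "R \<noteq> {1}"
    using roots \<open>k \<noteq> 1\<close> by (auto simp: R_def)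
  then obtain w where "w \<in> R" and "w \<noteq> 1"
    by blast
  hence zero: "f -` {f 0} = {0}"
    using almost_k_to_1_fibre_zero[OF assms(1,2)] by (simp add: R_def)
  show "\<exists>w. w ^ k = 1 \<and> y = w * x"
  proof (cases "x = 0")
    case True
    thus ?thesis
      using zero \<open>f y = f x\<close> by (auto intro!: exI[of _ 1])
  next
    case False
    have "card (f -` {f x}) \<noteq> 1"
    proof
      assume "card (f -` {f x}) = 1"
      moreover have "card (f -` {f 0}) = 1"
        using zero by simp
      ultimately have "f x = f 0"
        using assms(2) unfolding almost_k_to_1_def by blast
      thus False
        using zero False by auto
    qed
    hence "card (f -` {f x}) = k"
      using assms(2) unfolding almost_k_to_1_def by blast
    moreover have "(\<lambda>w. w * x) ` R \<subseteq> f -` {f x}"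
      using k_divisible_mult_root_of_unity[OF assms(1)] by (auto simp: R_def)
    moreover have "card ((\<lambda>w. w * x) ` R) = k"
      using False roots by (simp add: card_image_mult_right_nonzero R_def)
    ultimately have "f -` {f x} = (\<lambda>w. w * x) ` R"
      using card_subset_eq[of "f -` {f x}" "(\<lambda>w. w * x) ` R"] by simp
    thus ?thesis
      using \<open>f y = f x\<close> by (auto simp: R_def)
  qed
qed

lemma zero_diff_balanced_of_coset_fibres:
  fixes f :: "'a :: {finite, field} \<Rightarrow> 'a"
  assumes fibres: "\<And>x y. f y = f x \<longleftrightarrow> (\<exists>w. w ^ k = 1 \<and> y = w * x)"
    and roots: "card {w :: 'a. w ^ k = 1} = k"
  shows "zero_diff_balanced (k - 1) f"
  unfolding zero_diff_balanced_def
proof (intro allI impI)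
  fix a :: 'a assume "a \<noteq> 0"
  let ?R = "{w :: 'a. w ^ k = 1}"
  have "{x. f (x + a) = f x} = (\<lambda>w. a / (w - 1)) ` (?R - {1})"
  proof (intro subset_antisym subsetI)
    fix x assume "x \<in> {x. f (x + a) = f x}"
    then obtain w where "w ^ k = 1" and w: "x + a = w * x"
      using fibres[of "x + a" x] by blast
    hence "w \<noteq> 1"
      using \<open>a \<noteq> 0\<close> by auto
    hence "x = a / (w - 1)"
      using w by (simp add: field_simps)
    thus "x \<in> (\<lambda>w. a / (w - 1)) ` (?R - {1})"
      using \<open>w ^ k = 1\<close> \<open>w \<noteq> 1\<close> by (intro image_eqI[where x = w]) simp_all
  next
    fix x assume "x \<in> (\<lambda>w. a / (w - 1)) ` (?R - {1})"
    then obtain w where "w ^ k = 1" and "w \<noteq> 1" and "x = a / (w - 1)"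
      by blast
    hence "x + a = w * x"
      by (simp add: field_simps)
    thus "x \<in> {x. f (x + a) = f x}"
      using fibres[of "x + a" x] \<open>w ^ k = 1\<close> by blast
  qed
  moreover have "inj_on (\<lambda>w. a / (w - 1)) (?R - {1})"
    by (rule inj_onI) (use \<open>a \<noteq> 0\<close> in \<open>auto simp: field_simps\<close>)
  ultimately show "card {x. f (x + a) - f x = 0} = k - 1"
    using roots by (simp add: card_image card_Diff_singleton)
qed

theorem lemma3p1:
  fixes f :: "'a::{finite,field} \<Rightarrow> 'a" and p n d :: nat
  assumes "prime p" and "card (UNIV :: 'a set) = p ^ n"
    and "(d + 1) dvd (card (UNIV :: 'a set) - 1)"
    and "is_DO p n f" and "k_divisible (d + 1) f" and "almost_k_to_1 (d + 1) f"
  shows "zero_diff_balanced d f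
     \<and> (diff_uniform d f \<and> (\<forall>a. a \<noteq> 0 \<longrightarrow> prime_field_subspace (diff_set f a)))
     \<and> (\<exists>i. d = p ^ i)"
proof -
  have roots: "card {w :: 'a. w ^ (d + 1) = 1} = d + 1"
    by (rule card_roots_of_unity) (use assms(3) in simp_all)
  have polar: "additive_polarization f"
    using is_DO_additive_polarization[OF assms(1,2,4)] .
  have "d \<noteq> 0"
  proof
    assume "d = 0"
    thus False
      using not_almost_1_to_1[of "0 :: 'a" 1 f] assms(6) by simp
  qed
  have fibres: "f y = f x \<longleftrightarrow> (\<exists>w. w ^ (d + 1) = 1 \<and> y = w * x)" for x y
    using k_divisible_almost_k_to_1_eq_iff[OF assms(5,6) roots] \<open>d \<noteq> 0\<close> by simp
  have balanced: "zero_diff_balanced d f"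
    using zero_diff_balanced_of_coset_fibres[OF fibres roots] by simp
  have "prime_field_subspace (diff_set f a)" if "a \<noteq> 0" for a
    using zero_diff_balanced_ex_solution[OF balanced \<open>d \<noteq> 0\<close> that]
      prime_field_subspace_diff_set[OF polar] by blast
  moreover obtain i where "d = p ^ i"
    using zero_diff_balanced_dvd_card[OF polar balanced \<open>d \<noteq> 0\<close>] assms(2)
      divides_primepow_nat[OF assms(1)] by auto
  ultimately show ?thesis
    using balanced diff_uniform_of_zero_diff_balanced[OF polar balanced \<open>d \<noteq> 0\<close>] by blast
qed

end
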